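(* Let $M\in[0,1]^{n\times d}$, $\mu>0$, $\sigma>0$, and set $\lambda_1=1-e^{-\mu}$. Let $\tilde Y\in\mathbb{R}^{n\times d}$ be generated as follows: the $N_{ij}$, $(i,j)\in[n]\times[d]$, are i.i.d. $\mathrm{Poisson}(\mu)$; independently, $(\tilde Y_{i,j,k})_{i,j,k\geq1}$ are independent with $\tilde Y_{i,j,k}-M_{ij}$ centered and $\sigma^2$-subGaussian; and $\tilde Y_{ij}=\frac{1}{N_{ij}}\sum_{k=1}^{N_{ij}}\tilde Y_{i,j,k}$ with the convention $0/0=0$. Then for any nonempty $T\subseteq[n]\times[d]$ and any $\delta\in(0,1)$, with probability at least $1-\delta$, \[ \frac{1}{|T|}\Big|\sum_{(i,j)\in T}\big(\tilde Y_{ij}-\lambda_1M_{ij}\big)\Big|\leq\sqrt{2(1\vee\sigma^2)e^2\log(2/\delta)\lambda_1/|T|}+2(1\vee\sigma)\log(2/\delta)/|T| . \]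
   Context: A centered random variable $W$ is $\sigma^2$-subGaussian if $\mathbb{E}[\exp(tW)]\leq\exp(t^2\sigma^2/2)$ for all $t\in\mathbb{R}$. $e=\exp(1)$. *)

theory Defs
  imports "HOL-Probability.Probability"
begin

text \<open>The moment generating function is taken as a nonnegative integral, so no
  integrability side condition is hidden.\<close>
definition centered_subgaussian :: "'a measure \<Rightarrow> ('a \<Rightarrow> real) \<Rightarrow> real \<Rightarrow> bool" where
  "centered_subgaussian P W s2 \<longleftrightarrow>
     integrable P W \<and> integral\<^sup>L P W = 0 \<and>
     (\<forall>t::real. (\<integral>\<^sup>+ x. ennreal (exp (t * W x)) \<partial>P) \<le> ennreal (exp (t\<^sup>2 * s2 / 2)))"

definition avg_obs :: "(nat \<Rightarrow> nat \<Rightarrow> 'a \<Rightarrow> nat) \<Rightarrow> (nat \<Rightarrow> nat \<Rightarrow> nat \<Rightarrow> 'a \<Rightarrow> real) \<Rightarrow> nat \<Rightarrow> nat \<Rightarrow> 'a \<Rightarrow> real" where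
  "avg_obs N Y i j x = (if N i j x = 0 then 0
      else (\<Sum>k\<in>{1..N i j x}. Y i j k x) / real (N i j x))"

end

theory Submission
  imports Defs
begin

text \<open>A cell is empty with probability e^-mu, and then contributes -lambda_1 M_ij; otherwise,
  given its count m, it is an average of m independent sigma^2-subGaussians centred at M_ij, whose
  moment generating function is at most exp(t (1 - lambda_1) M_ij + t^2 sigma^2/2). Mixing the two
  cases and using exp y <= 1 + y + y^2 for |y| <= 1 shows that each centred cell has moment
  generating function at most exp(lambda_1 e^2 (1 v sigma)^2 t^2/2) for |t| (1 v sigma) <= 1.
  By independence across cells the sum over T is sub-gamma with variance factor
  V = |T| lambda_1 e^2 (1 v sigma)^2 and scale 1 v sigma, and a Chernoff bound on both tails with
  L = log(2/delta) gives the deviation sqrt(2 V L) + 2 (1 v sigma) L.\<close>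

lemma exp_le_one_plus_x_plus_sq:
  fixes y :: real
  assumes "\<bar>y\<bar> \<le> 1"
  shows "exp y \<le> 1 + y + y\<^sup>2"
proof (cases "y \<ge> 0")
  case True
  then show ?thesis using exp_bound[of y] assms by auto
next
  case False
  define u where "u = - y"
  have u: "0 \<le> u" "u \<le> 1" using False assms by (auto simp: u_def)
  have "1 \<le> (1 - u + u\<^sup>2) * (1 + u + u\<^sup>2/2)"
  proof -
    have "(1 - u + u\<^sup>2) * (1 + u + u\<^sup>2/2) = 1 + u\<^sup>2/2 + u^3/2 + u^4/2"
      by (simp add: power2_eq_square power3_eq_cube power4_eq_xxxx field_simps)
    then show ?thesis using u by simp
  qed
  also have "\<dots> \<le> (1 - u + u\<^sup>2) * exp u"
    using exp_lower_Taylor_quadratic[of u] u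
    by (intro mult_left_mono) (auto simp: power2_eq_square)
  finally have "exp (- u) \<le> 1 - u + u\<^sup>2"
    by (simp add: exp_minus field_simps)
  then show ?thesis by (simp add: u_def)
qed

lemma exp_one_sq_ge: "2 + 3/2 * exp (1::real) \<le> (exp 1)\<^sup>2"
proof -
  have "5/2 \<le> exp (1::real)" using exp_lower_Taylor_quadratic[of 1] by simp
  then have "0 \<le> (exp (1::real) - 5/2) * (exp 1 + 1)" by (intro mult_nonneg_nonneg) auto
  then show ?thesis by (simp add: power2_eq_square algebra_simps)
qed

lemma exp_linear_quadratic_sub_linear_le:
  fixes a \<sigma> t s :: real
  assumes a: "0 \<le> a" "a \<le> 1" and s: "1 \<le> s" "\<sigma>\<^sup>2 \<le> s\<^sup>2" and t: "\<bar>t\<bar> * s \<le> 1"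
  shows "exp (t * a + t\<^sup>2 * \<sigma>\<^sup>2 / 2) - 1 - t * a \<le> (exp 1)\<^sup>2 * s\<^sup>2 * t\<^sup>2 / 2"
proof -
  define y where "y = t * a"
  define q where "q = t\<^sup>2 * \<sigma>\<^sup>2 / 2"
  have "(\<bar>t\<bar> * s)\<^sup>2 \<le> 1" using t s by (simp add: power_le_one)
  then have ts: "t\<^sup>2 * s\<^sup>2 \<le> 1" by (simp add: power_mult_distrib)
  have t_ts: "t\<^sup>2 \<le> t\<^sup>2 * s\<^sup>2" using s by (intro mult_le_cancel_left1[THEN iffD2]) auto
  have y: "\<bar>y\<bar> \<le> 1" "y\<^sup>2 \<le> t\<^sup>2"
  proof -
    have "y\<^sup>2 = t\<^sup>2 * a\<^sup>2" by (simp add: y_def power_mult_distrib)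
    also have "\<dots> \<le> t\<^sup>2" using a by (intro mult_left_le) (auto simp: power_le_one)
    finally show "y\<^sup>2 \<le> t\<^sup>2" .
    with t_ts ts show "\<bar>y\<bar> \<le> 1" using abs_square_le_1[of y] by linarith
  qed
  have q: "0 \<le> q" "q \<le> t\<^sup>2 * s\<^sup>2 / 2"
    using s by (auto simp: q_def intro: mult_left_mono)
  have eq: "exp q - 1 \<le> 3/2 * q"
  proof -
    have "exp q \<le> 1 + q + q\<^sup>2" using exp_bound[of q] q ts by auto
    moreover have "q * q \<le> q * (1/2)" using q ts by (intro mult_left_mono) auto
    ultimately show ?thesis by (simp add: power2_eq_square)
  qed
  have "exp (y + q) - 1 - y = (exp y - 1 - y) + exp y * (exp q - 1)"
    by (simp add: exp_add algebra_simps)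
  also have "\<dots> \<le> y\<^sup>2 + exp 1 * (3/2 * q)"
  proof -
    have "exp y * (exp q - 1) \<le> exp 1 * (3/2 * q)"
      using y eq q by (intro mult_mono) auto
    then show ?thesis using exp_le_one_plus_x_plus_sq[OF y(1)] by linarith
  qed
  also have "\<dots> \<le> (2 + 3/2 * exp 1) * (s\<^sup>2 * t\<^sup>2) / 2"
  proof -
    have "exp 1 * (3/2 * q) \<le> exp 1 * (3/4 * (t\<^sup>2 * s\<^sup>2))"
      using q by (intro mult_left_mono) (auto simp: mult.commute)
    moreover have "(2 + 3/2 * exp 1) * (s\<^sup>2 * t\<^sup>2) / 2 = t\<^sup>2 * s\<^sup>2 + exp 1 * (3/4 * (t\<^sup>2 * s\<^sup>2))"
      by (simp add: algebra_simps)
    ultimately show ?thesis using y(2) t_ts by linarith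
  qed
  also have "\<dots> \<le> (exp 1)\<^sup>2 * (s\<^sup>2 * t\<^sup>2) / 2"
    using exp_one_sq_ge by (intro divide_right_mono mult_right_mono) auto
  finally show ?thesis by (simp add: mult_ac y_def q_def)
qed

lemma thinned_mixture_exp_le:
  fixes a \<sigma> t s lam :: real
  assumes a: "0 \<le> a" "a \<le> 1" and s: "1 \<le> s" "\<sigma>\<^sup>2 \<le> s\<^sup>2" and t: "\<bar>t\<bar> * s \<le> 1"
    and lam: "0 \<le> lam"
  shows "(1 - lam) * exp (- t * lam * a) + lam * exp (t * (1 - lam) * a + t\<^sup>2 * \<sigma>\<^sup>2 / 2)
          \<le> exp (lam * (exp 1)\<^sup>2 * s\<^sup>2 * t\<^sup>2 / 2)"
proof -
  define u where "u = exp (t * a + t\<^sup>2 * \<sigma>\<^sup>2 / 2)"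
  have "exp (t * (1 - lam) * a + t\<^sup>2 * \<sigma>\<^sup>2 / 2) = exp (- t * lam * a) * u"
    by (simp add: u_def algebra_simps flip: exp_add)
  then have "(1 - lam) * exp (- t * lam * a) + lam * exp (t * (1 - lam) * a + t\<^sup>2 * \<sigma>\<^sup>2 / 2)
      = exp (- t * lam * a) * (1 + lam * (u - 1))"
    by (simp add: algebra_simps)
  also have "\<dots> \<le> exp (- t * lam * a) * exp (lam * (u - 1))"
    by (intro mult_left_mono exp_ge_add_one_self) auto
  also have "\<dots> = exp (lam * (u - 1 - t * a))"
    by (simp add: algebra_simps flip: exp_add)
  also have "\<dots> \<le> exp (lam * ((exp 1)\<^sup>2 * s\<^sup>2 * t\<^sup>2 / 2))"
    using exp_linear_quadratic_sub_linear_le[OF a s t] lam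
    unfolding u_def by (subst exp_le_cancel_iff) (rule mult_left_mono)
  finally show ?thesis by (simp add: mult_ac)
qed

lemma subgamma_chernoff_exponent_le:
  fixes V L s :: real
  assumes V: "V > 0" and L: "L > 0" and s: "s > 0"
  defines "t \<equiv> min (sqrt (2 * L / V)) (1 / s)"
  shows "- t * (sqrt (2 * V * L) + 2 * s * L) + V * t\<^sup>2 / 2 \<le> - L"
proof -
  have t0: "t > 0" using V L s by (simp add: t_def)
  have "V * t\<^sup>2 \<le> V * (sqrt (2 * L / V))\<^sup>2"
    using t0 V by (intro mult_left_mono power_mono) (auto simp: t_def)
  then have quadratic: "V * t\<^sup>2 / 2 \<le> L" using V L by simp
  have linear: "2 * L \<le> t * (sqrt (2 * V * L) + 2 * s * L)"
  proof (cases "sqrt (2 * L / V) \<le> 1 / s")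
    case True
    then have "t * sqrt (2 * V * L) = sqrt ((2 * L)\<^sup>2)"
      by (simp add: t_def flip: real_sqrt_mult) (use V in \<open>simp add: power2_eq_square\<close>)
    also have "\<dots> = 2 * L" using L by (simp only: real_sqrt_abs)
    finally show ?thesis using t0 s L by (simp add: distrib_left)
  next
    case False
    then have "t * (2 * s * L) = 2 * L" using s by (simp add: t_def)
    moreover have "0 \<le> t * sqrt (2 * V * L)" using t0 V L by simp
    ultimately show ?thesis by (simp only: distrib_left)
  qed
  show ?thesis using quadratic linear by linarith
qed

lemma mult_sqrt_div_add_div:
  fixes c x y :: real
  assumes "0 < c"
  shows "c * (sqrt (x / c) + y / c) = sqrt (c * x) + y"
proof -
  have "c * sqrt (x / c) = sqrt (c\<^sup>2 * (x / c))"
    using assms by (simp only: real_sqrt_mult real_sqrt_abs abs_of_pos)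
  also have "c\<^sup>2 * (x / c) = c * x"
    using assms by (simp add: power2_eq_square)
  finally show ?thesis using assms by (simp add: distrib_left)
qed

lemma max_one_power2:
  fixes \<sigma> :: real
  assumes "0 \<le> \<sigma>"
  shows "max 1 (\<sigma>\<^sup>2) = (max 1 \<sigma>)\<^sup>2"
  using assms power_le_one[of \<sigma> 2] one_le_power[of \<sigma> 2] by (cases "\<sigma> \<le> 1") (auto simp: max_def)

lemma centered_subgaussian_mgf_le:
  "centered_subgaussian M W s2 \<Longrightarrow>
    (\<integral>\<^sup>+x. ennreal (exp (t * W x)) \<partial>M) \<le> ennreal (exp (t\<^sup>2 * s2 / 2))"
  by (simp add: centered_subgaussian_def)

definition obs_family :: "(nat \<Rightarrow> nat \<Rightarrow> 'a \<Rightarrow> nat) \<Rightarrow> (nat \<Rightarrow> nat \<Rightarrow> nat \<Rightarrow> 'a \<Rightarrow> real)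
    \<Rightarrow> (nat \<times> nat) + (nat \<times> nat \<times> nat) \<Rightarrow> 'a \<Rightarrow> real" where
  "obs_family N Y z x = (case z of Inl (i, j) \<Rightarrow> real (N i j x) | Inr (i, j, k) \<Rightarrow> Y i j k x)"

lemma obs_family_simps [simp]:
  "obs_family N Y (Inl (i, j)) = (\<lambda>x. real (N i j x))"
  "obs_family N Y (Inr (i, j, k)) = Y i j k"
  by (simp_all add: obs_family_def fun_eq_iff)

lemma (in prob_space) indep_vars_measurable:
  "indep_vars M' X I \<Longrightarrow> i \<in> I \<Longrightarrow> X i \<in> measurable M (M' i)"
  by (simp add: indep_vars_def)

lemma avg_obs_measurable:
  assumes "N i j \<in> measurable M (count_space UNIV)"
    and "\<And>k. 1 \<le> k \<Longrightarrow> Y i j k \<in> borel_measurable M"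
  shows "avg_obs N Y i j \<in> borel_measurable M"
proof -
  have "avg_obs N Y i j =
      (\<lambda>x. (\<lambda>m x. if m = 0 then 0 else (\<Sum>k\<in>{1..m}. Y i j k x) / real m) (N i j x) x)"
    by (auto simp: avg_obs_def fun_eq_iff)
  also have "\<dots> \<in> borel_measurable M"
  proof (rule measurable_compose_countable[OF _ assms(1)])
    fix m :: nat
    have "(\<lambda>x. \<Sum>k\<in>{1..m}. Y i j k x) \<in> borel_measurable M"
      using assms(2) by (intro borel_measurable_sum) auto
    then show "(\<lambda>x. if m = 0 then 0 else (\<Sum>k\<in>{1..m}. Y i j k x) / real m) \<in> borel_measurable M"
      by (cases "m = 0") auto
  qed
  finally show ?thesis .
qed

lemma nn_integral_split_nat_values:
  fixes N :: "'a \<Rightarrow> nat" and f :: "'a \<Rightarrow> ennreal"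
  assumes [measurable]: "N \<in> measurable M (count_space UNIV)" "f \<in> borel_measurable M"
  shows "(\<integral>\<^sup>+x. f x \<partial>M) = (\<Sum>m. \<integral>\<^sup>+x. f x * indicator {x \<in> space M. N x = m} x \<partial>M)"
proof -
  have "(\<Sum>m. f x * indicator {x \<in> space M. N x = m} x) = f x" if "x \<in> space M" for x
  proof -
    have "(\<Sum>m. f x * indicator {x \<in> space M. N x = m} x)
        = (\<Sum>m\<in>{N x}. f x * indicator {x \<in> space M. N x = m} x)"
      by (rule suminf_finite) (auto simp: indicator_def)
    then show ?thesis using that by simp
  qed
  then have "(\<integral>\<^sup>+x. f x \<partial>M) = (\<integral>\<^sup>+x. (\<Sum>m. f x * indicator {x \<in> space M. N x = m} x) \<partial>M)"
    by (intro nn_integral_cong) simp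
  also have "\<dots> = (\<Sum>m. \<integral>\<^sup>+x. f x * indicator {x \<in> space M. N x = m} x \<partial>M)"
    by (rule nn_integral_suminf) measurable
  finally show ?thesis .
qed

lemma nn_integral_pmf_if_zero:
  fixes p :: "nat pmf" and c0 c1 :: real
  assumes "0 \<le> c0" "0 \<le> c1"
  shows "(\<integral>\<^sup>+m. ennreal (if m = 0 then c0 else c1) \<partial>measure_pmf p)
    = ennreal (pmf p 0 * c0 + (1 - pmf p 0) * c1)"
proof -
  have "(\<integral>\<^sup>+m. ennreal (if m = 0 then c0 else c1) \<partial>measure_pmf p)
      = (\<integral>\<^sup>+m. ennreal c0 * indicator {0} m + ennreal c1 * indicator (UNIV - {0}) m \<partial>measure_pmf p)"
    by (intro nn_integral_cong) (simp add: indicator_def)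
  also have "\<dots> = ennreal c0 * emeasure (measure_pmf p) {0}
      + ennreal c1 * emeasure (measure_pmf p) (UNIV - {0})"
    by (subst nn_integral_add) (auto simp: nn_integral_cmult_indicator)
  also have "emeasure (measure_pmf p) (UNIV - {0}) = ennreal (1 - pmf p 0)"
    using measure_pmf.prob_compl[of "{0}" p]
    by (simp add: measure_pmf.emeasure_eq_measure measure_pmf_single)
  also have "ennreal c0 * emeasure (measure_pmf p) {0} = ennreal (pmf p 0 * c0)"
    using assms by (simp add: emeasure_pmf_single ennreal_mult' mult.commute)
  also have "ennreal c1 * ennreal (1 - pmf p 0) = ennreal ((1 - pmf p 0) * c1)"
    using assms by (simp add: ennreal_mult' mult.commute)
  finally show ?thesis
    using assms pmf_le_1[of p 0] by simp
qed

lemma avg_obs_on_count: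
  assumes "N i j x = m" "m \<noteq> 0"
  shows "t * (avg_obs N Y i j x - a) = (\<Sum>k\<in>{1..m}. t / real m * (Y i j k x - a))"
proof -
  have "(\<Sum>k\<in>{1..m}. t / real m * (Y i j k x - a)) = t / real m * ((\<Sum>k\<in>{1..m}. Y i j k x) - real m * a)"
    by (simp only: sum_distrib_left[symmetric] sum_subtractf sum_constant card_atLeastAtMost) simp
  then show ?thesis using assms by (simp add: avg_obs_def field_simps)
qed

lemma (in prob_space) avg_obs_mgf_on_count:
  fixes N :: "nat \<Rightarrow> nat \<Rightarrow> 'a \<Rightarrow> nat" and Y :: "nat \<Rightarrow> nat \<Rightarrow> nat \<Rightarrow> 'a \<Rightarrow> real"
  assumes indep: "indep_vars (\<lambda>_. borel) (obs_family N Y) I"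
    and I: "Inl (i, j) \<in> I" "\<And>k. k \<in> {1..m} \<Longrightarrow> Inr (i, j, k) \<in> I"
    and Y: "\<And>k. k \<in> {1..m} \<Longrightarrow> centered_subgaussian M (\<lambda>x. Y i j k x - a) \<sigma>2"
    and m: "m \<noteq> 0"
  shows "(\<integral>\<^sup>+x. ennreal (exp (t * (avg_obs N Y i j x - a))) * indicator {x \<in> space M. N i j x = m} x \<partial>M)
    \<le> emeasure M {x \<in> space M. N i j x = m} * ennreal (exp (t\<^sup>2 * \<sigma>2 / (2 * real m)))"
proof -
  txt \<open>On the event N i j = m the integrand is a product of functions of the count and of the
    first m samples, so independence factorises its integral.\<close>
  define J where "J = insert (Inl (i, j)) ((\<lambda>k. Inr (i, j, k)) ` {1..m})"
  define h :: "(nat \<times> nat) + (nat \<times> nat \<times> nat) \<Rightarrow> real \<Rightarrow> ennreal" where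
    "h w r = (case w of Inl _ \<Rightarrow> indicator {real m} r | Inr _ \<Rightarrow> ennreal (exp (t / real m * (r - a))))"
    for w r
  have prod_J: "(\<Prod>w\<in>J. g w) = g (Inl (i, j)) * (\<Prod>k\<in>{1..m}. g (Inr (i, j, k)))"
    for g :: "_ \<Rightarrow> ennreal"
    unfolding J_def by (subst prod.insert) (auto simp: prod.reindex inj_on_def)
  have h_measurable: "h w \<in> borel_measurable borel" for w
    by (cases w) (simp_all add: h_def[abs_def])
  have indep_J: "indep_vars (\<lambda>_. borel) (\<lambda>w x. h w (obs_family N Y w x)) J"
    using I by (intro indep_vars_compose2[OF indep_vars_subset[OF indep]] h_measurable)
      (auto simp: J_def)
  have "(\<integral>\<^sup>+x. ennreal (exp (t * (avg_obs N Y i j x - a))) * indicator {x \<in> space M. N i j x = m} x \<partial>M)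
      = (\<integral>\<^sup>+x. (\<Prod>w\<in>J. h w (obs_family N Y w x)) \<partial>M)"
  proof (intro nn_integral_cong)
    fix x assume x: "x \<in> space M"
    show "ennreal (exp (t * (avg_obs N Y i j x - a))) * indicator {x \<in> space M. N i j x = m} x
        = (\<Prod>w\<in>J. h w (obs_family N Y w x))"
    proof (cases "N i j x = m")
      case True
      then show ?thesis
        using x m by (simp add: prod_J h_def avg_obs_on_count exp_sum prod_ennreal)
    qed (simp add: prod_J h_def)
  qed
  also have "\<dots> = (\<Prod>w\<in>J. \<integral>\<^sup>+x. h w (obs_family N Y w x) \<partial>M)"
    by (rule indep_vars_nn_integral[OF _ indep_J]) (auto simp: J_def)
  also have "\<dots> = (\<integral>\<^sup>+x. h (Inl (i, j)) (real (N i j x)) \<partial>M)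
      * (\<Prod>k\<in>{1..m}. \<integral>\<^sup>+x. ennreal (exp (t / real m * (Y i j k x - a))) \<partial>M)"
    by (simp add: prod_J h_def)
  also have "\<dots> \<le> emeasure M {x \<in> space M. N i j x = m} * (\<Prod>k\<in>{1..m}. ennreal (exp ((t / real m)\<^sup>2 * \<sigma>2 / 2)))"
  proof (intro mult_mono prod_mono_ennreal)
    have [measurable]: "(\<lambda>x. real (N i j x)) \<in> borel_measurable M"
      using indep_vars_measurable[OF indep I(1)] by simp
    have "{x \<in> space M. N i j x = m} = {x \<in> space M. real (N i j x) = real m}" by auto
    also have "\<dots> \<in> sets M" by measurable
    finally have "{x \<in> space M. N i j x = m} \<in> sets M" .
    moreover have "(\<integral>\<^sup>+x. h (Inl (i, j)) (real (N i j x)) \<partial>M) = (\<integral>\<^sup>+x. indicator {x \<in> space M. N i j x = m} x \<partial>M)"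
      by (intro nn_integral_cong) (simp add: h_def indicator_def)
    ultimately show "(\<integral>\<^sup>+x. h (Inl (i, j)) (real (N i j x)) \<partial>M) \<le> emeasure M {x \<in> space M. N i j x = m}"
      by simp
    fix k assume "k \<in> {1..m}"
    then show "(\<integral>\<^sup>+x. ennreal (exp (t / real m * (Y i j k x - a))) \<partial>M) \<le> ennreal (exp ((t / real m)\<^sup>2 * \<sigma>2 / 2))"
      by (rule centered_subgaussian_mgf_le[OF Y])
  qed auto
  also have "(\<Prod>k\<in>{1..m}. ennreal (exp ((t / real m)\<^sup>2 * \<sigma>2 / 2))) = ennreal (exp (t\<^sup>2 * \<sigma>2 / (2 * real m)))"
    using m by (simp add: ennreal_power flip: exp_of_nat_mult) (simp add: power2_eq_square field_simps)
  finally show ?thesis .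
qed

lemma (in prob_space) avg_obs_shifted_mgf_on_count:
  fixes N :: "nat \<Rightarrow> nat \<Rightarrow> 'a \<Rightarrow> nat" and Y :: "nat \<Rightarrow> nat \<Rightarrow> nat \<Rightarrow> 'a \<Rightarrow> real"
  assumes indep: "indep_vars (\<lambda>_. borel) (obs_family N Y) I"
    and I: "Inl (i, j) \<in> I" "\<And>k. 1 \<le> k \<Longrightarrow> Inr (i, j, k) \<in> I"
    and N_meas: "N i j \<in> measurable M (count_space UNIV)"
    and Y: "\<And>k. 1 \<le> k \<Longrightarrow> centered_subgaussian M (\<lambda>x. Y i j k x - a) (\<sigma>\<^sup>2)"
    and m: "m \<noteq> 0"
  shows "(\<integral>\<^sup>+x. ennreal (exp (t * (avg_obs N Y i j x - b))) * indicator {x \<in> space M. N i j x = m} x \<partial>M)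
    \<le> emeasure M {x \<in> space M. N i j x = m} * ennreal (exp (t * (a - b) + t\<^sup>2 * \<sigma>\<^sup>2 / 2))"
proof -
  have shift: "ennreal (exp (t * (avg_obs N Y i j x - b)))
      = ennreal (exp (t * (a - b))) * ennreal (exp (t * (avg_obs N Y i j x - a)))" for x
  proof -
    have "exp (t * (avg_obs N Y i j x - b)) = exp (t * (a - b)) * exp (t * (avg_obs N Y i j x - a))"
      by (simp add: algebra_simps flip: exp_add)
    then show ?thesis by (simp only: ennreal_mult exp_ge_zero)
  qed
  have "(\<integral>\<^sup>+x. ennreal (exp (t * (avg_obs N Y i j x - b))) * indicator {x \<in> space M. N i j x = m} x \<partial>M)
      = ennreal (exp (t * (a - b)))
        * (\<integral>\<^sup>+x. ennreal (exp (t * (avg_obs N Y i j x - a))) * indicator {x \<in> space M. N i j x = m} x \<partial>M)"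
  proof -
    have [measurable]: "Y i j k \<in> borel_measurable M" if "1 \<le> k" for k
      using indep_vars_measurable[OF indep I(2)[OF that]] by simp
    have [measurable]: "avg_obs N Y i j \<in> borel_measurable M"
      by (rule avg_obs_measurable) (simp_all add: N_meas)
    show ?thesis
      unfolding shift mult.assoc using N_meas by (intro nn_integral_cmult) measurable
  qed
  also have "\<dots> \<le> ennreal (exp (t * (a - b)))
      * (emeasure M {x \<in> space M. N i j x = m} * ennreal (exp (t\<^sup>2 * \<sigma>\<^sup>2 / (2 * real m))))"
    using I Y m by (intro mult_left_mono avg_obs_mgf_on_count[OF indep]) auto
  also have "\<dots> \<le> ennreal (exp (t * (a - b)))
      * (emeasure M {x \<in> space M. N i j x = m} * ennreal (exp (t\<^sup>2 * \<sigma>\<^sup>2 / 2)))"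
    using m by (intro mult_left_mono ennreal_leI exp_mono divide_left_mono) auto
  also have "\<dots> = emeasure M {x \<in> space M. N i j x = m} * ennreal (exp (t * (a - b) + t\<^sup>2 * \<sigma>\<^sup>2 / 2))"
    by (simp add: exp_add ennreal_mult mult_ac)
  finally show ?thesis .
qed

lemma (in prob_space) avg_obs_mgf_le_thinned_mixture:
  fixes N :: "nat \<Rightarrow> nat \<Rightarrow> 'a \<Rightarrow> nat" and Y :: "nat \<Rightarrow> nat \<Rightarrow> nat \<Rightarrow> 'a \<Rightarrow> real"
  assumes indep: "indep_vars (\<lambda>_. borel) (obs_family N Y) I"
    and I: "Inl (i, j) \<in> I" "\<And>k. 1 \<le> k \<Longrightarrow> Inr (i, j, k) \<in> I"
    and N_meas: "N i j \<in> measurable M (count_space UNIV)"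
    and N_poisson: "distr M (count_space UNIV) (N i j) = measure_pmf (poisson_pmf \<mu>)"
    and Y: "\<And>k. 1 \<le> k \<Longrightarrow> centered_subgaussian M (\<lambda>x. Y i j k x - a) (\<sigma>\<^sup>2)"
    and \<mu>: "0 < \<mu>"
  defines "lam \<equiv> 1 - exp (- \<mu>)"
  shows "(\<integral>\<^sup>+x. ennreal (exp (t * (avg_obs N Y i j x - lam * a))) \<partial>M)
    \<le> ennreal ((1 - lam) * exp (- t * lam * a) + lam * exp (t * (1 - lam) * a + t\<^sup>2 * \<sigma>\<^sup>2 / 2))"
proof -
  define c0 where "c0 = exp (- t * lam * a)"
  define c1 where "c1 = exp (t * (1 - lam) * a + t\<^sup>2 * \<sigma>\<^sup>2 / 2)"
  define f where "f x = ennreal (exp (t * (avg_obs N Y i j x - lam * a)))" for x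
  define g where "g x = ennreal (if N i j x = 0 then c0 else c1)" for x
  define E where "E m = {x \<in> space M. N i j x = m}" for m
  note [measurable] = N_meas
  have [measurable]: "Y i j k \<in> borel_measurable M" if "1 \<le> k" for k
    using indep_vars_measurable[OF indep I(2)[OF that]] by simp
  have [measurable]: "avg_obs N Y i j \<in> borel_measurable M"
    by (rule avg_obs_measurable) (simp_all add: N_meas)
  have [measurable]: "E m \<in> sets M" for m
    unfolding E_def by measurable
  have on_count: "(\<integral>\<^sup>+x. f x * indicator (E m) x \<partial>M) \<le> (\<integral>\<^sup>+x. g x * indicator (E m) x \<partial>M)" for m
  proof (cases "m = 0")
    case True
    then show ?thesis
      by (intro nn_integral_mono) (simp add: f_def g_def c0_def E_def avg_obs_def indicator_def)
  next
    case False
    have "(\<integral>\<^sup>+x. f x * indicator (E m) x \<partial>M)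
        \<le> emeasure M (E m) * ennreal (exp (t * (a - lam * a) + t\<^sup>2 * \<sigma>\<^sup>2 / 2))"
      unfolding f_def E_def using I N_meas Y False by (intro avg_obs_shifted_mgf_on_count[OF indep]) auto
    also have "\<dots> = ennreal c1 * emeasure M (E m)"
      by (simp add: c1_def algebra_simps)
    also have "\<dots> = (\<integral>\<^sup>+x. ennreal c1 * indicator (E m) x \<partial>M)"
      by (rule nn_integral_cmult_indicator[symmetric]) simp
    also have "\<dots> = (\<integral>\<^sup>+x. g x * indicator (E m) x \<partial>M)"
      using False by (intro nn_integral_cong) (simp add: g_def E_def indicator_def)
    finally show ?thesis .
  qed
  have "(\<integral>\<^sup>+x. f x \<partial>M) = (\<Sum>m. \<integral>\<^sup>+x. f x * indicator (E m) x \<partial>M)"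
    unfolding E_def f_def by (rule nn_integral_split_nat_values) measurable
  also have "\<dots> \<le> (\<Sum>m. \<integral>\<^sup>+x. g x * indicator (E m) x \<partial>M)"
    by (intro suminf_le on_count) auto
  also have "\<dots> = (\<integral>\<^sup>+x. g x \<partial>M)"
    unfolding E_def g_def by (rule nn_integral_split_nat_values[symmetric]) measurable
  also have "\<dots> = (\<integral>\<^sup>+m. ennreal (if m = 0 then c0 else c1) \<partial>measure_pmf (poisson_pmf \<mu>))"
    unfolding g_def N_poisson[symmetric] by (subst nn_integral_distr) auto
  also have "\<dots> = ennreal ((1 - lam) * c0 + lam * c1)"
    using \<mu> by (subst nn_integral_pmf_if_zero) (auto simp: c0_def c1_def lam_def)
  finally show ?thesis by (simp add: f_def c0_def c1_def)
qed

lemma (in prob_space) avg_obs_mgf_le: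
  fixes N :: "nat \<Rightarrow> nat \<Rightarrow> 'a \<Rightarrow> nat" and Y :: "nat \<Rightarrow> nat \<Rightarrow> nat \<Rightarrow> 'a \<Rightarrow> real"
  assumes indep: "indep_vars (\<lambda>_. borel) (obs_family N Y) I"
    and I: "Inl (i, j) \<in> I" "\<And>k. 1 \<le> k \<Longrightarrow> Inr (i, j, k) \<in> I"
    and N_meas: "N i j \<in> measurable M (count_space UNIV)"
    and N_poisson: "distr M (count_space UNIV) (N i j) = measure_pmf (poisson_pmf \<mu>)"
    and Y: "\<And>k. 1 \<le> k \<Longrightarrow> centered_subgaussian M (\<lambda>x. Y i j k x - a) (\<sigma>\<^sup>2)"
    and \<mu>: "0 < \<mu>" and a: "0 \<le> a" "a \<le> 1"
    and s: "1 \<le> s" "\<sigma>\<^sup>2 \<le> s\<^sup>2" and t: "\<bar>t\<bar> * s \<le> 1"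
  shows "(\<integral>\<^sup>+x. ennreal (exp (t * (avg_obs N Y i j x - (1 - exp (- \<mu>)) * a))) \<partial>M)
    \<le> ennreal (exp ((1 - exp (- \<mu>)) * (exp 1)\<^sup>2 * s\<^sup>2 * t\<^sup>2 / 2))"
proof -
  have "(\<integral>\<^sup>+x. ennreal (exp (t * (avg_obs N Y i j x - (1 - exp (- \<mu>)) * a))) \<partial>M)
      \<le> ennreal ((1 - (1 - exp (- \<mu>))) * exp (- t * (1 - exp (- \<mu>)) * a)
        + (1 - exp (- \<mu>)) * exp (t * (1 - (1 - exp (- \<mu>))) * a + t\<^sup>2 * \<sigma>\<^sup>2 / 2))"
    by (rule avg_obs_mgf_le_thinned_mixture[OF indep I N_meas N_poisson Y \<mu>])
  also have "\<dots> \<le> ennreal (exp ((1 - exp (- \<mu>)) * (exp 1)\<^sup>2 * s\<^sup>2 * t\<^sup>2 / 2))"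
    using \<mu> by (intro ennreal_leI thinned_mixture_exp_le a s t) simp
  finally show ?thesis .
qed

lemma (in prob_space) indep_vars_avg_obs:
  fixes N :: "nat \<Rightarrow> nat \<Rightarrow> 'a \<Rightarrow> nat" and Y :: "nat \<Rightarrow> nat \<Rightarrow> nat \<Rightarrow> 'a \<Rightarrow> real"
  assumes indep: "indep_vars (\<lambda>_. borel) (obs_family N Y) I"
    and I: "\<And>i j. (i, j) \<in> T \<Longrightarrow> Inl (i, j) \<in> I"
      "\<And>i j k. (i, j) \<in> T \<Longrightarrow> 1 \<le> k \<Longrightarrow> Inr (i, j, k) \<in> I"
  shows "indep_vars (\<lambda>_. borel) (\<lambda>(i, j). avg_obs N Y i j) T"
proof -
  txt \<open>Each average is a measurable function (built from N' and Y') of the restriction of the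
    family to the block K c of its cell, and blocks of distinct cells are disjoint.\<close>
  define K where "K c = insert (Inl c) ((\<lambda>k. Inr (fst c, snd c, k)) ` {1::nat..})" for c :: "nat \<times> nat"
  define N' :: "nat \<Rightarrow> nat \<Rightarrow> ((nat \<times> nat) + (nat \<times> nat \<times> nat) \<Rightarrow> real) \<Rightarrow> nat" where "N' i j \<omega> = nat \<lfloor>\<omega> (Inl (i, j))\<rfloor>" for i j \<omega>
  define Y' :: "nat \<Rightarrow> nat \<Rightarrow> nat \<Rightarrow> ((nat \<times> nat) + (nat \<times> nat \<times> nat) \<Rightarrow> real) \<Rightarrow> real" where "Y' i j k \<omega> = \<omega> (Inr (i, j, k))" for i j k \<omega>
  define obs_on where "obs_on c x = restrict (\<lambda>w. obs_family N Y w x) (K c)" for c x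
  have blocks: "indep_vars (\<lambda>c. PiM (K c) (\<lambda>_. borel)) obs_on T"
    unfolding obs_on_def
    using I by (intro indep_vars_restrict[OF indep]) (auto simp: K_def disjoint_family_on_def)
  have "avg_obs N' Y' (fst c) (snd c) \<in> borel_measurable (PiM (K c) (\<lambda>_. borel))" for c
  proof (rule avg_obs_measurable)
    have "(\<lambda>\<omega>. \<omega> (Inl c) :: real) \<in> borel_measurable (PiM (K c) (\<lambda>_. borel))"
      by (rule measurable_component_singleton) (simp add: K_def)
    then have "(\<lambda>\<omega>. \<lfloor>\<omega> (Inl c) :: real\<rfloor>) \<in> measurable (PiM (K c) (\<lambda>_. borel)) (count_space UNIV)"
      by (rule measurable_compose[OF _ measurable_real_floor])
    then show "N' (fst c) (snd c) \<in> measurable (PiM (K c) (\<lambda>_. borel)) (count_space UNIV)"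
      unfolding N'_def prod.collapse by (rule measurable_compose) simp
    show "Y' (fst c) (snd c) k \<in> borel_measurable (PiM (K c) (\<lambda>_. borel))" if "1 \<le> k" for k
      unfolding Y'_def using that by (intro measurable_component_singleton) (simp add: K_def)
  qed
  then have "indep_vars (\<lambda>_. borel) (\<lambda>c x. avg_obs N' Y' (fst c) (snd c) (obs_on c x)) T"
    by (intro indep_vars_compose2[OF blocks])
  moreover have "avg_obs N' Y' (fst c) (snd c) (obs_on c x) = avg_obs N Y (fst c) (snd c) x" for c x
    by (cases c) (auto simp: avg_obs_def N'_def Y'_def obs_on_def K_def intro!: sum.cong)
  ultimately show ?thesis by (simp add: split_def)
qed

lemma (in prob_space) sum_avg_obs_mgf_le:
  fixes N :: "nat \<Rightarrow> nat \<Rightarrow> 'a \<Rightarrow> nat" and Y :: "nat \<Rightarrow> nat \<Rightarrow> nat \<Rightarrow> 'a \<Rightarrow> real"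
    and Mat :: "nat \<Rightarrow> nat \<Rightarrow> real"
  assumes indep: "indep_vars (\<lambda>_. borel) (obs_family N Y) I"
    and I: "\<And>i j. (i, j) \<in> T \<Longrightarrow> Inl (i, j) \<in> I"
      "\<And>i j k. (i, j) \<in> T \<Longrightarrow> 1 \<le> k \<Longrightarrow> Inr (i, j, k) \<in> I"
    and T: "finite T"
    and N_meas: "\<And>i j. (i, j) \<in> T \<Longrightarrow> N i j \<in> measurable M (count_space UNIV)"
    and N_poisson: "\<And>i j. (i, j) \<in> T \<Longrightarrow>
      distr M (count_space UNIV) (N i j) = measure_pmf (poisson_pmf \<mu>)"
    and Y: "\<And>i j k. (i, j) \<in> T \<Longrightarrow> 1 \<le> k \<Longrightarrow>
      centered_subgaussian M (\<lambda>x. Y i j k x - Mat i j) (\<sigma>\<^sup>2)"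
    and Mat: "\<And>i j. (i, j) \<in> T \<Longrightarrow> 0 \<le> Mat i j \<and> Mat i j \<le> 1"
    and \<mu>: "0 < \<mu>" and s: "1 \<le> s" "\<sigma>\<^sup>2 \<le> s\<^sup>2" and t: "\<bar>t\<bar> * s \<le> 1"
  shows "(\<integral>\<^sup>+x. ennreal (exp (t * (\<Sum>(i, j)\<in>T. avg_obs N Y i j x - (1 - exp (- \<mu>)) * Mat i j))) \<partial>M)
    \<le> ennreal (exp (real (card T) * ((1 - exp (- \<mu>)) * (exp 1)\<^sup>2 * s\<^sup>2 * t\<^sup>2 / 2)))"
proof -
  define lam where "lam = 1 - exp (- \<mu>)"
  define v where "v = lam * (exp 1)\<^sup>2 * s\<^sup>2 * t\<^sup>2 / 2"
  define Z where "Z c x = avg_obs N Y (fst c) (snd c) x - lam * Mat (fst c) (snd c)" for c x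
  have "indep_vars (\<lambda>_. borel)
      (\<lambda>c x. ennreal (exp (t * ((\<lambda>(i, j). avg_obs N Y i j) c x - lam * Mat (fst c) (snd c))))) T"
    by (intro indep_vars_compose2[OF indep_vars_avg_obs[OF indep I]]) measurable
  then have indep_Z: "indep_vars (\<lambda>_. borel) (\<lambda>c x. ennreal (exp (t * Z c x))) T"
    by (simp add: Z_def split_def)
  have "(\<integral>\<^sup>+x. ennreal (exp (t * (\<Sum>(i, j)\<in>T. avg_obs N Y i j x - lam * Mat i j))) \<partial>M)
      = (\<integral>\<^sup>+x. (\<Prod>c\<in>T. ennreal (exp (t * Z c x))) \<partial>M)"
    by (intro nn_integral_cong)
      (simp add: Z_def split_def sum_distrib_left exp_sum T prod_ennreal)
  also have "\<dots> = (\<Prod>c\<in>T. \<integral>\<^sup>+x. ennreal (exp (t * Z c x)) \<partial>M)"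
    by (rule indep_vars_nn_integral[OF T indep_Z]) simp
  also have "\<dots> \<le> (\<Prod>c\<in>T. ennreal (exp v))"
  proof (rule prod_mono_ennreal)
    fix c assume "c \<in> T"
    moreover obtain i j where "c = (i, j)" by fastforce
    ultimately show "(\<integral>\<^sup>+x. ennreal (exp (t * Z c x)) \<partial>M) \<le> ennreal (exp v)"
      unfolding Z_def v_def lam_def using Mat[of i j]
      by (auto intro!: avg_obs_mgf_le[OF indep] I N_meas N_poisson Y \<mu> s t)
  qed
  also have "\<dots> = ennreal (exp (real (card T) * v))"
    by (simp add: ennreal_power exp_of_nat_mult)
  finally show ?thesis by (simp add: v_def lam_def)
qed

lemma (in prob_space) subgamma_upper_tail:
  fixes S :: "'a \<Rightarrow> real"
  assumes [measurable]: "S \<in> borel_measurable M"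
    and V: "0 < V" and L: "0 < L" and s: "0 < s"
    and mgf: "\<And>u. 0 < u \<Longrightarrow> u * s \<le> 1 \<Longrightarrow>
      (\<integral>\<^sup>+x. ennreal (exp (u * S x)) \<partial>M) \<le> ennreal (exp (V * u\<^sup>2 / 2))"
  shows "prob {x \<in> space M. sqrt (2 * V * L) + 2 * s * L \<le> S x} \<le> exp (- L)"
proof -
  define A where "A = sqrt (2 * V * L) + 2 * s * L"
  define t where "t = min (sqrt (2 * L / V)) (1 / s)"
  have t: "0 < t" "t * s \<le> 1"
    using V L s by (auto simp: t_def min_def field_simps)
  have "emeasure M {x \<in> space M. A \<le> S x}
      \<le> ennreal (exp (- t * A)) * (\<integral>\<^sup>+x. ennreal (exp (t * S x)) * indicator (space M) x \<partial>M)"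
    using t by (intro Chernoff_ineq_nn_integral_ge) auto
  also have "(\<integral>\<^sup>+x. ennreal (exp (t * S x)) * indicator (space M) x \<partial>M) = (\<integral>\<^sup>+x. ennreal (exp (t * S x)) \<partial>M)"
    by (intro nn_integral_cong) simp
  also have "ennreal (exp (- t * A)) * \<dots> \<le> ennreal (exp (- t * A)) * ennreal (exp (V * t\<^sup>2 / 2))"
    using t by (intro mult_left_mono mgf) auto
  also have "\<dots> = ennreal (exp (- t * A + V * t\<^sup>2 / 2))"
    by (subst exp_add) (rule ennreal_mult[symmetric]; simp)
  also have "\<dots> \<le> ennreal (exp (- L))"
    using subgamma_chernoff_exponent_le[OF V L s] by (simp add: A_def t_def)
  finally show ?thesis
    by (simp add: A_def emeasure_eq_measure)
qed

lemma (in prob_space) subgamma_concentration: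
  fixes S :: "'a \<Rightarrow> real"
  assumes [measurable]: "S \<in> borel_measurable M"
    and V: "0 < V" and L: "0 < L" and s: "0 < s"
    and mgf: "\<And>u. \<bar>u\<bar> * s \<le> 1 \<Longrightarrow>
      (\<integral>\<^sup>+x. ennreal (exp (u * S x)) \<partial>M) \<le> ennreal (exp (V * u\<^sup>2 / 2))"
  shows "1 - 2 * exp (- L) \<le> prob {x \<in> space M. \<bar>S x\<bar> \<le> sqrt (2 * V * L) + 2 * s * L}"
proof -
  define A where "A = sqrt (2 * V * L) + 2 * s * L"
  have upper: "prob {x \<in> space M. A \<le> S x} \<le> exp (- L)"
    unfolding A_def using V L s by (intro subgamma_upper_tail mgf) auto
  have lower: "prob {x \<in> space M. A \<le> - S x} \<le> exp (- L)"
    unfolding A_def using V L s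
    by (intro subgamma_upper_tail) (use mgf[of "- _"] in auto)
  have "space M - {x \<in> space M. \<bar>S x\<bar> \<le> A}
      \<subseteq> {x \<in> space M. A \<le> S x} \<union> {x \<in> space M. A \<le> - S x}"
    by auto
  then have "prob (space M - {x \<in> space M. \<bar>S x\<bar> \<le> A})
      \<le> prob {x \<in> space M. A \<le> S x} + prob {x \<in> space M. A \<le> - S x}"
    by (intro order_trans[OF finite_measure_mono measure_Un_le]) auto
  then show ?thesis
    using upper lower prob_compl[of "{x \<in> space M. \<bar>S x\<bar> \<le> A}"] by (simp add: A_def)
qed

lemma (in prob_space) sum_avg_obs_concentration:
  fixes N :: "nat \<Rightarrow> nat \<Rightarrow> 'a \<Rightarrow> nat" and Y :: "nat \<Rightarrow> nat \<Rightarrow> nat \<Rightarrow> 'a \<Rightarrow> real"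
    and Mat :: "nat \<Rightarrow> nat \<Rightarrow> real"
  assumes indep: "indep_vars (\<lambda>_. borel) (obs_family N Y) I"
    and I: "\<And>i j. (i, j) \<in> T \<Longrightarrow> Inl (i, j) \<in> I"
      "\<And>i j k. (i, j) \<in> T \<Longrightarrow> 1 \<le> k \<Longrightarrow> Inr (i, j, k) \<in> I"
    and T: "finite T" "T \<noteq> {}"
    and N_meas: "\<And>i j. (i, j) \<in> T \<Longrightarrow> N i j \<in> measurable M (count_space UNIV)"
    and N_poisson: "\<And>i j. (i, j) \<in> T \<Longrightarrow>
      distr M (count_space UNIV) (N i j) = measure_pmf (poisson_pmf \<mu>)"
    and Y: "\<And>i j k. (i, j) \<in> T \<Longrightarrow> 1 \<le> k \<Longrightarrow>
      centered_subgaussian M (\<lambda>x. Y i j k x - Mat i j) (\<sigma>\<^sup>2)"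
    and Mat: "\<And>i j. (i, j) \<in> T \<Longrightarrow> 0 \<le> Mat i j \<and> Mat i j \<le> 1"
    and \<mu>: "0 < \<mu>" and s: "1 \<le> s" "\<sigma>\<^sup>2 \<le> s\<^sup>2" and L: "0 < L"
  defines "V \<equiv> real (card T) * ((1 - exp (- \<mu>)) * (exp 1)\<^sup>2 * s\<^sup>2)"
  shows "1 - 2 * exp (- L) \<le> prob {x \<in> space M.
    \<bar>\<Sum>(i, j)\<in>T. avg_obs N Y i j x - (1 - exp (- \<mu>)) * Mat i j\<bar> \<le> sqrt (2 * V * L) + 2 * s * L}"
proof (rule subgamma_concentration)
  have [measurable]: "Y i j k \<in> borel_measurable M" if "(i, j) \<in> T" "1 \<le> k" for i j k
    using indep_vars_measurable[OF indep I(2)[OF that]] by simp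
  show "(\<lambda>x. \<Sum>(i, j)\<in>T. avg_obs N Y i j x - (1 - exp (- \<mu>)) * Mat i j) \<in> borel_measurable M"
    unfolding split_def
    by (intro borel_measurable_sum borel_measurable_diff avg_obs_measurable N_meas) auto
  show "0 < V" using T \<mu> s by (simp add: V_def card_gt_0_iff)
  show "(\<integral>\<^sup>+x. ennreal (exp (u * (\<Sum>(i, j)\<in>T. avg_obs N Y i j x - (1 - exp (- \<mu>)) * Mat i j))) \<partial>M)
      \<le> ennreal (exp (V * u\<^sup>2 / 2))" if "\<bar>u\<bar> * s \<le> 1" for u
    using sum_avg_obs_mgf_le[OF indep I T(1) N_meas N_poisson Y Mat \<mu> s that]
    by (simp add: V_def mult_ac)
qed (use L s in auto)

theorem mainTheorem5:
  fixes P :: "'a measure"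
    and n d :: nat
    and Mat :: "nat \<Rightarrow> nat \<Rightarrow> real"
    and \<mu> \<sigma> \<delta> :: real
    and N :: "nat \<Rightarrow> nat \<Rightarrow> 'a \<Rightarrow> nat"
    and Y :: "nat \<Rightarrow> nat \<Rightarrow> nat \<Rightarrow> 'a \<Rightarrow> real"
    and T :: "(nat \<times> nat) set"
  assumes P: "prob_space P"
    and Mat_range: "\<And>i j. i < n \<Longrightarrow> j < d \<Longrightarrow> 0 \<le> Mat i j \<and> Mat i j \<le> 1"
    and mu_pos: "\<mu> > 0" and sigma_pos: "\<sigma> > 0"
    and N_meas: "\<And>i j. i < n \<Longrightarrow> j < d \<Longrightarrow> N i j \<in> measurable P (count_space UNIV)"
    and N_poisson: "\<And>i j. i < n \<Longrightarrow> j < d \<Longrightarrow>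
                      distr P (count_space UNIV) (N i j) = measure_pmf (poisson_pmf \<mu>)"
    and Y_subg: "\<And>i j k. i < n \<Longrightarrow> j < d \<Longrightarrow> k \<ge> 1 \<Longrightarrow>
                      centered_subgaussian P (\<lambda>x. Y i j k x - Mat i j) (\<sigma>\<^sup>2)"
    and indep: "prob_space.indep_vars P (\<lambda>_. borel)
                  (\<lambda>z x. case z of Inl (i, j) \<Rightarrow> real (N i j x) | Inr (i, j, k) \<Rightarrow> Y i j k x)
                  (Inl ` ({..<n} \<times> {..<d}) \<union> Inr ` ({..<n} \<times> {..<d} \<times> {1..}))"
    and T_sub: "T \<subseteq> {..<n} \<times> {..<d}" and T_ne: "T \<noteq> {}"
    and delta: "0 < \<delta>" "\<delta> < 1"
  shows "measure P {x \<in> space P.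
           (1 / real (card T)) * \<bar>\<Sum>(i, j)\<in>T. avg_obs N Y i j x - (1 - exp (- \<mu>)) * Mat i j\<bar>
           \<le> sqrt (2 * max 1 (\<sigma>\<^sup>2) * (exp 1)\<^sup>2 * ln (2 / \<delta>) * (1 - exp (- \<mu>)) / real (card T))
             + 2 * max 1 \<sigma> * ln (2 / \<delta>) / real (card T)} \<ge> 1 - \<delta>"
proof -
  interpret prob_space P by (rule P)
  define s where "s = max 1 \<sigma>"
  define L where "L = ln (2 / \<delta>)"
  define lam where "lam = 1 - exp (- \<mu>)"
  define S where "S x = (\<Sum>(i, j)\<in>T. avg_obs N Y i j x - lam * Mat i j)" for x
  define B where "B = sqrt (2 * s\<^sup>2 * (exp 1)\<^sup>2 * L * lam / real (card T)) + 2 * s * L / real (card T)"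
  have T: "finite T" "0 < real (card T)"
    using T_ne finite_subset[OF T_sub] by (auto simp: card_gt_0_iff)
  have s: "1 \<le> s" "\<sigma>\<^sup>2 \<le> s\<^sup>2"
    using sigma_pos by (auto simp: s_def intro: power_mono)
  have L: "0 < L" "2 * exp (- L) = \<delta>"
    using delta by (simp_all add: L_def exp_minus)
  have obs: "indep_vars (\<lambda>_. borel) (obs_family N Y) (Inl ` ({..<n} \<times> {..<d}) \<union> Inr ` ({..<n} \<times> {..<d} \<times> {1..}))"
    using indep unfolding obs_family_def[abs_def] .
  have "1 - \<delta> \<le> prob {x \<in> space P. \<bar>S x\<bar> \<le> sqrt (real (card T) * (2 * s\<^sup>2 * (exp 1)\<^sup>2 * L * lam)) + 2 * s * L}"
    using sum_avg_obs_concentration[OF obs _ _ T(1) T_ne _ _ _ _ mu_pos s L(1)] T_sub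
      Mat_range N_meas N_poisson Y_subg L(2)
    by (auto simp: subset_iff S_def lam_def mult_ac)
  also have "sqrt (real (card T) * (2 * s\<^sup>2 * (exp 1)\<^sup>2 * L * lam)) + 2 * s * L = real (card T) * B"
    unfolding B_def by (rule mult_sqrt_div_add_div[OF T(2), symmetric])
  also have "{x \<in> space P. \<bar>S x\<bar> \<le> real (card T) * B} = {x \<in> space P. 1 / real (card T) * \<bar>S x\<bar> \<le> B}"
    using T(2) by (auto simp: field_simps)
  finally show ?thesis
    unfolding max_one_power2[OF less_imp_le[OF sigma_pos]] s_def[symmetric] L_def[symmetric] lam_def[symmetric]
    by (simp add: S_def B_def)
qed

end
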